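(* Let $\eta(0)\in\Omega$. Then the vector $B_L\Gamma\sin(\eta)$ is a conserved quantity of the dynamical system $\dot\eta=B_S^T(\eta)\omega_G$, $M\dot\omega_G=-A\omega_G-B_G\Gamma\sin(\eta)+u$ over the interval of existence of the solution.
   Context: A power network is modeled on a connected undirected graph with $n$ nodes and $m$ edges, nodes partitioned into $n_g$ generator and $n_\ell$ load nodes. $B$ is an incidence matrix partitioned row-wise as $B=\begin{bmatrix}B_G^T & B_L^T\end{bmatrix}^T$ (generator rows, load rows). $\Gamma=\mathrm{diag}(\gamma_k)$ is positive definite, $M,A$ are positive definite diagonal, $u\in\mathbb{R}^{n_g}$. $\sin,\cos$ act elementwise, $\Omega=(-\frac{\pi}{2},\frac{\pi}{2})^m$, $\Gamma'(\eta)=\Gamma\,\mathrm{diag}(\cos(\eta_k))$, and $B_S(\eta)=B_G\big(I-\Gamma'(\eta)B_L^T(B_L\Gamma'(\eta)B_L^T)^{-1}B_L\big)$. The state is $(\eta,\omega_G)\in\operatorname{im}B^T\times\mathbb{R}^{n_g}$. *)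

theory Defs
  imports "HOL-Analysis.Analysis"
begin

definition mdiag :: "real ^ 'n \<Rightarrow> real ^ 'n ^ 'n" where
  "mdiag v = (\<chi> i j. if i = j then v $ i else 0)"

definition vsin :: "real ^ 'n \<Rightarrow> real ^ 'n" where
  "vsin v = (\<chi> k. sin (v $ k))"

definition vcos :: "real ^ 'n \<Rightarrow> real ^ 'n" where
  "vcos v = (\<chi> k. cos (v $ k))"

definition Omega :: "(real ^ 'e) set" where
  "Omega = {x. \<forall>k. - (pi/2) < x $ k \<and> x $ k < pi/2}"

text \<open>Full incidence matrix B (nodes = generators + loads), entry (node, edge).\<close>
definition Bfull :: "real ^ 'e ^ 'g \<Rightarrow> real ^ 'e ^ 'l \<Rightarrow> ('g + 'l) \<Rightarrow> 'e \<Rightarrow> real" where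
  "Bfull BG BL x e = (case x of Inl g \<Rightarrow> BG $ g $ e | Inr l \<Rightarrow> BL $ l $ e)"

definition is_incidence :: "real ^ 'e ^ 'g \<Rightarrow> real ^ 'e ^ 'l \<Rightarrow> bool" where
  "is_incidence BG BL \<longleftrightarrow> (\<forall>e. \<exists>i j. i \<noteq> j \<and> Bfull BG BL i e = 1 \<and> Bfull BG BL j e = -1
       \<and> (\<forall>k. k \<noteq> i \<and> k \<noteq> j \<longrightarrow> Bfull BG BL k e = 0))"

definition adjacent :: "real ^ 'e ^ 'g \<Rightarrow> real ^ 'e ^ 'l \<Rightarrow> ('g + 'l) \<Rightarrow> ('g + 'l) \<Rightarrow> bool" where
  "adjacent BG BL x y \<longleftrightarrow> x \<noteq> y \<and> (\<exists>e. Bfull BG BL x e \<noteq> 0 \<and> Bfull BG BL y e \<noteq> 0)"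

definition graph_connected :: "real ^ 'e ^ 'g \<Rightarrow> real ^ 'e ^ 'l \<Rightarrow> bool" where
  "graph_connected BG BL \<longleftrightarrow> (\<forall>x y. (x, y) \<in> {(a, b). adjacent BG BL a b}\<^sup>*)"

definition Gammap :: "real ^ 'e \<Rightarrow> real ^ 'e \<Rightarrow> real ^ 'e ^ 'e" where
  "Gammap \<gamma> \<eta> = mdiag \<gamma> ** mdiag (vcos \<eta>)"

definition BS :: "real ^ 'e ^ 'g \<Rightarrow> real ^ 'e ^ 'l \<Rightarrow> real ^ 'e \<Rightarrow> real ^ 'e \<Rightarrow> real ^ 'e ^ 'g" where
  "BS BG BL \<gamma> \<eta> = BG ** (mat 1 - Gammap \<gamma> \<eta> ** transpose BL
      ** matrix_inv (BL ** Gammap \<gamma> \<eta> ** transpose BL) ** BL)"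

end

theory Submission
  imports Defs
begin

text \<open>Along a solution, the derivative of \<open>B\<^sub>L \<Gamma> sin \<eta>\<close> is
  \<open>B\<^sub>L \<Gamma>'(\<eta>) B\<^sub>S(\<eta>)\<^sup>T \<omega>\<^sub>G\<close>. With \<open>K = B\<^sub>L \<Gamma>' B\<^sub>L\<^sup>T\<close> the matrix
  \<open>I - \<Gamma>' B\<^sub>L\<^sup>T K\<^sup>-\<^sup>1 B\<^sub>L\<close> is a projection along the range of \<open>\<Gamma>' B\<^sub>L\<^sup>T\<close>,
  so \<open>B\<^sub>L \<Gamma>' B\<^sub>S\<^sup>T = 0\<close> identically and the derivative vanishes.
  The remaining input is that \<open>K\<close> is invertible: on \<open>\<Omega>\<close> the weights
  \<open>\<gamma>\<^sub>k cos \<eta>\<^sub>k\<close> are positive, so \<open>K\<close> is a weighted Gram matrix of \<open>B\<^sub>L\<^sup>T\<close>, and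
  \<open>B\<^sub>L\<^sup>T\<close> is injective because a potential vanishing on the generator nodes
  and having zero differences along every edge of a connected graph vanishes.\<close>

lemma matrix_mul_diff_left: "(A::'a::ring_1^'n^'m) ** (B - C) = A ** B - A ** C"
  by (simp add: matrix_matrix_mult_def vec_eq_iff algebra_simps sum_subtractf)

lemma transpose_diff: "transpose ((A::'a::ab_group_add^'n^'m) - B) = transpose A - transpose B"
  by (simp add: transpose_def vec_eq_iff)

lemma mdiag_mult_mdiag: "mdiag (a::real^'n) ** mdiag b = mdiag (a * b)"
  by (auto simp: mdiag_def matrix_matrix_mult_def vec_eq_iff if_distrib[of "\<lambda>x. x * _"] cong: if_cong)

lemma mdiag_matrix_vector_mult: "mdiag (a::real^'n) *v v = a * v"
  by (auto simp: mdiag_def matrix_vector_mult_def vec_eq_iff if_distrib[of "\<lambda>x. x * _"] cong: if_cong)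

lemma transpose_mdiag [simp]: "transpose (mdiag (a::real^'n)) = mdiag a"
  by (auto simp: mdiag_def transpose_def vec_eq_iff)

lemma matrix_inv_left:
  fixes A :: "real^'n^'n"
  assumes "invertible A"
  shows "matrix_inv A ** A = mat 1"
  using assms unfolding invertible_def matrix_inv_def by (metis (mono_tags, lifting) someI_ex)

lemma Gammap_eq_mdiag: "Gammap \<gamma> \<eta> = mdiag (\<gamma> * vcos \<eta>)"
  by (simp add: Gammap_def mdiag_mult_mdiag)

lemma vcos_pos_Omega:
  assumes "\<eta> \<in> Omega"
  shows "vcos \<eta> $ k > 0"
  using assms cos_gt_zero_pi by (auto simp: Omega_def vcos_def)

lemma has_vector_derivative_vsin:
  fixes x :: "real \<Rightarrow> real^'n"
  assumes "(x has_vector_derivative dx) (at t within S)"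
  shows "((\<lambda>s. vsin (x s)) has_vector_derivative vcos (x t) * dx) (at t within S)"
proof -
  have "((\<lambda>s. x s $ k) has_field_derivative dx $ k) (at t within S)" for k
    using bounded_linear.has_vector_derivative[OF bounded_linear_vec_nth assms]
    by (simp add: has_real_derivative_iff_has_vector_derivative)
  then have "((\<lambda>s. sin (x s $ k)) has_field_derivative cos (x t $ k) * dx $ k) (at t within S)" for k
    by (rule DERIV_chain2[OF DERIV_sin])
  then show ?thesis
    unfolding has_vector_derivative_def
    by (subst has_derivative_componentwise_within)
       (auto simp: Basis_vec_def inner_axis vsin_def vcos_def has_field_derivative_def mult_commute_abs mult.commute)
qed

lemma incidence_potential_eq_if_adjacent:
  assumes inc: "is_incidence BG BL"
    and balanced: "\<And>e. (\<Sum>k\<in>UNIV. Bfull BG BL k e * f k) = 0"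
    and "adjacent BG BL p q"
  shows "f p = f q"
proof -
  from \<open>adjacent BG BL p q\<close> obtain e where pq: "p \<noteq> q" "Bfull BG BL p e \<noteq> 0" "Bfull BG BL q e \<noteq> 0"
    unfolding adjacent_def by blast
  from inc obtain i j where ij: "i \<noteq> j" "Bfull BG BL i e = 1" "Bfull BG BL j e = -1"
    and others: "\<forall>k. k \<noteq> i \<and> k \<noteq> j \<longrightarrow> Bfull BG BL k e = 0"
    unfolding is_incidence_def by blast
  have "(\<Sum>k\<in>UNIV. Bfull BG BL k e * f k) = (\<Sum>k\<in>{i,j}. Bfull BG BL k e * f k)"
    using others by (intro sum.mono_neutral_right) auto
  also have "\<dots> = f i - f j"
    using ij by simp
  finally have "f i = f j"
    using balanced[of e] by simp
  moreover have "p = i \<or> p = j" "q = i \<or> q = j"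
    using pq others by auto
  ultimately show ?thesis
    using pq(1) by metis
qed

lemma incidence_potential_constant:
  assumes inc: "is_incidence BG BL" and conn: "graph_connected BG BL"
    and balanced: "\<And>e. (\<Sum>k\<in>UNIV. Bfull BG BL k e * f k) = 0"
  shows "f p = f q"
proof -
  have "(p, q) \<in> {(a, b). adjacent BG BL a b}\<^sup>*"
    using conn unfolding graph_connected_def by blast
  then show ?thesis
  proof (induction rule: rtrancl_induct)
    case (step y z)
    then show ?case
      using incidence_potential_eq_if_adjacent[OF inc balanced] by simp
  qed simp
qed

lemma incidence_load_transpose_injective:
  fixes BG :: "real ^ 'e::finite ^ 'g::finite" and BL :: "real ^ 'e ^ 'l::finite"
  assumes inc: "is_incidence BG BL" and conn: "graph_connected BG BL"
    and "transpose BL *v x = 0"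
  shows "x = 0"
proof -
  define f :: "'g + 'l \<Rightarrow> real" where "f = case_sum (\<lambda>_. 0) (\<lambda>l. x $ l)"
  have "(\<Sum>k\<in>UNIV. Bfull BG BL k e * f k) = (transpose BL *v x) $ e" for e
    unfolding UNIV_Plus_UNIV[symmetric] sum.Plus[OF finite finite]
    by (simp add: Bfull_def f_def matrix_vector_mult_def transpose_def)
  then have "f (Inr l) = f (Inl undefined)" for l
    using incidence_potential_constant[OF inc conn] \<open>transpose BL *v x = 0\<close> by simp
  then show ?thesis
    by (simp add: vec_eq_iff f_def)
qed

lemma invertible_weighted_gram:
  fixes L :: "real^'n^'m"
  assumes injective: "\<And>x. transpose L *v x = 0 \<Longrightarrow> x = 0"
    and c_pos: "\<And>k. c $ k > 0"
  shows "invertible (L ** mdiag c ** transpose L)"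
  unfolding invertible_left_inverse matrix_left_invertible_ker
proof (intro allI impI)
  fix x assume "(L ** mdiag c ** transpose L) *v x = 0"
  define y where "y = transpose L *v x"
  have "(\<Sum>k\<in>UNIV. c $ k * (y $ k)\<^sup>2) = inner y (c * y)"
    by (simp add: inner_vec_def power2_eq_square mult.commute mult.left_commute)
  also have "\<dots> = inner x ((L ** mdiag c ** transpose L) *v x)"
    by (simp add: y_def dot_lmul_matrix[symmetric] matrix_vector_mul_assoc[symmetric] mdiag_matrix_vector_mult)
  also have "\<dots> = 0"
    using \<open>(L ** mdiag c ** transpose L) *v x = 0\<close> by simp
  finally have "c $ k * (y $ k)\<^sup>2 = 0" for k
    using c_pos[THEN less_imp_le] by (subst (asm) sum_nonneg_eq_0_iff) auto
  then have "y = 0"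
    using c_pos by (simp add: vec_eq_iff) (metis less_irrefl)
  then show "x = 0"
    using injective y_def by simp
qed

lemma weighted_gram_projection_complement_annihilated:
  fixes L :: "real^'n^'m" and D :: "real^'n^'n"
  assumes D_sym: "transpose D = D" and Ki: "Ki ** (L ** D ** transpose L) = mat 1"
  shows "L ** D ** transpose (mat 1 - D ** transpose L ** Ki ** L) = 0"
proof -
  have "(L ** D ** transpose L) ** transpose Ki = transpose (Ki ** (L ** D ** transpose L))"
    by (simp add: matrix_transpose_mul D_sym matrix_mul_assoc)
  then have K_Ki: "(L ** D ** transpose L) ** transpose Ki = mat 1"
    by (simp add: Ki)
  have "L ** D ** transpose (mat 1 - D ** transpose L ** Ki ** L)
      = L ** D - ((L ** D ** transpose L) ** transpose Ki) ** (L ** D)"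
    by (simp add: transpose_diff matrix_transpose_mul D_sym matrix_mul_diff_left matrix_mul_assoc)
  also have "\<dots> = 0"
    by (simp add: K_Ki)
  finally show ?thesis .
qed

lemma BL_Gammap_BS_transpose_eq_0:
  fixes BG :: "real ^ 'e::finite ^ 'g::finite" and BL :: "real ^ 'e ^ 'l::finite"
  assumes inc: "is_incidence BG BL" and conn: "graph_connected BG BL"
    and gamma_pos: "\<forall>k. \<gamma> $ k > 0" and "\<eta> \<in> Omega"
  shows "BL ** Gammap \<gamma> \<eta> ** transpose (BS BG BL \<gamma> \<eta>) = 0"
proof -
  define c where "c = \<gamma> * vcos \<eta>"
  have "c $ k > 0" for k
    using gamma_pos vcos_pos_Omega[OF \<open>\<eta> \<in> Omega\<close>] by (simp add: c_def)
  then have "invertible (BL ** mdiag c ** transpose BL)"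
    by (intro invertible_weighted_gram incidence_load_transpose_injective[OF inc conn])
  then have "BL ** mdiag c ** transpose (mat 1 - mdiag c ** transpose BL
               ** matrix_inv (BL ** mdiag c ** transpose BL) ** BL) = 0"
    by (intro weighted_gram_projection_complement_annihilated matrix_inv_left) simp_all
  moreover have "BL ** Gammap \<gamma> \<eta> ** transpose (BS BG BL \<gamma> \<eta>)
      = (BL ** mdiag c ** transpose (mat 1 - mdiag c ** transpose BL
               ** matrix_inv (BL ** mdiag c ** transpose BL) ** BL)) ** transpose BG"
    by (simp only: BS_def Gammap_eq_mdiag c_def matrix_transpose_mul matrix_mul_assoc)
  ultimately show ?thesis
    by simp
qed

theorem proposition3:
  fixes BG :: "real ^ 'e::finite ^ 'g::finite"
    and BL :: "real ^ 'e ^ 'l::finite"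
    and \<gamma> :: "real ^ 'e"
    and m a u :: "real ^ 'g"
    and T :: "real set"
    and \<eta> d\<eta> :: "real \<Rightarrow> real ^ 'e"
    and \<omega> d\<omega> :: "real \<Rightarrow> real ^ 'g"
  assumes inc: "is_incidence BG BL"
    and conn: "graph_connected BG BL"
    and gamma_pos: "\<forall>k. \<gamma> $ k > 0"
    and M_pos: "\<forall>i. m $ i > 0"
    and A_pos: "\<forall>i. a $ i > 0"
    and T_int: "is_interval T" and T0: "0 \<in> T"
    and eta0: "\<eta> 0 \<in> Omega"
    and in_Omega: "\<forall>t\<in>T. \<eta> t \<in> Omega"
    and in_imBT: "\<forall>t\<in>T. \<exists>\<theta>G \<theta>L. \<eta> t = transpose BG *v \<theta>G + transpose BL *v \<theta>L"
    and deta: "\<forall>t\<in>T. (\<eta> has_vector_derivative d\<eta> t) (at t within T)"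
    and domega: "\<forall>t\<in>T. (\<omega> has_vector_derivative d\<omega> t) (at t within T)"
    and ode1: "\<forall>t\<in>T. d\<eta> t = transpose (BS BG BL \<gamma> (\<eta> t)) *v \<omega> t"
    and ode2: "\<forall>t\<in>T. mdiag m *v d\<omega> t
                 = - (mdiag a *v \<omega> t) - BG *v (mdiag \<gamma> *v vsin (\<eta> t)) + u"
  shows "\<forall>t\<in>T. BL *v (mdiag \<gamma> *v vsin (\<eta> t)) = BL *v (mdiag \<gamma> *v vsin (\<eta> 0))"
proof -
  define Q where "Q s = (BL ** mdiag \<gamma>) *v vsin (\<eta> s)" for s
  have "(Q has_vector_derivative 0) (at t within T)" if "t \<in> T" for t
  proof -
    have "(Q has_vector_derivative (BL ** mdiag \<gamma>) *v (vcos (\<eta> t) * d\<eta> t)) (at t within T)"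
      unfolding Q_def using deta \<open>t \<in> T\<close>
      by (intro bounded_linear.has_vector_derivative[OF matrix_vector_mul_bounded_linear]
            has_vector_derivative_vsin) simp
    also have "(BL ** mdiag \<gamma>) *v (vcos (\<eta> t) * d\<eta> t)
        = (BL ** Gammap \<gamma> (\<eta> t) ** transpose (BS BG BL \<gamma> (\<eta> t))) *v \<omega> t"
      using ode1 \<open>t \<in> T\<close>
      by (simp add: Gammap_eq_mdiag mdiag_matrix_vector_mult matrix_vector_mul_assoc[symmetric]
            mult.assoc)
    also have "\<dots> = 0"
      using BL_Gammap_BS_transpose_eq_0[OF inc conn gamma_pos] in_Omega \<open>t \<in> T\<close> by simp
    finally show ?thesis .
  qed
  then obtain q where "\<And>t. t \<in> T \<Longrightarrow> Q t = q"
    using has_vector_derivative_zero_constant[OF is_interval_convex[OF T_int]] by blast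
  then show ?thesis
    using T0 by (simp add: Q_def matrix_vector_mul_assoc)
qed

end
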